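(* In the one-way trading setting, for every $\pi\ge1$, $$\Phi_\Delta(\pi)=\frac{\Delta}{\pi}\,(1+\ln\theta),\qquad \theta=M/m.$$
   Context: One-way trading: fix $\Delta>0$, $0<m\le M$, $\theta=M/m$. The revenue function at time $t$ is $g_t(v)=p(t)\,v$ on $[0,\Delta]$ with price $p(t)\in[m,M]$; an input is a finite price sequence $\sigma=(p(1),\dots,p(T))$, $T\ge1$. The offline optimum on $\sigma^{[1:t]}=(p(1),\dots,p(t))$ is $\eta_{OPT}(\sigma^{[1:t]})=\Delta\max_{s\le t}p(s)$. For $\pi\ge1$, CR-Pursuit($\pi$) sells at time $t$ the quantity $\bar v_t=\frac{\Delta}{\pi p(t)}\big(\max_{s\le t}p(s)-\max_{s\le t-1}p(s)\big)$, with the maximum over an empty set equal to $0$. $\Phi_\Delta(\pi)$ is the supremum over all finite inputs of $\sum_t\bar v_t$. *)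

theory Defs
  imports Complex_Main
begin

text \<open>An input is a nonempty finite price sequence sigma = (p(1),...,p(T)), encoded as a
  list; p(t) is the list element at position t - 1.\<close>

definition price :: "real list \<Rightarrow> nat \<Rightarrow> real" where
  "price \<sigma> t = \<sigma> ! (t - 1)"

definition valid_input :: "real \<Rightarrow> real \<Rightarrow> real list \<Rightarrow> bool" where
  "valid_input m M \<sigma> \<longleftrightarrow> \<sigma> \<noteq> [] \<and> (\<forall>t\<in>{1..length \<sigma>}. m \<le> price \<sigma> t \<and> price \<sigma> t \<le> M)"

definition run_max :: "real list \<Rightarrow> nat \<Rightarrow> real" where
  "run_max \<sigma> t = (if t = 0 then 0 else Max {price \<sigma> s | s. 1 \<le> s \<and> s \<le> t})"

definition eta_OPT :: "real \<Rightarrow> real list \<Rightarrow> nat \<Rightarrow> real" where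
  "eta_OPT \<Delta> \<sigma> t = \<Delta> * run_max \<sigma> t"

definition cr_pursuit_qty :: "real \<Rightarrow> real \<Rightarrow> real list \<Rightarrow> nat \<Rightarrow> real" where
  "cr_pursuit_qty \<Delta> \<pi> \<sigma> t = \<Delta> / (\<pi> * price \<sigma> t) * (run_max \<sigma> t - run_max \<sigma> (t - 1))"

definition total_sold :: "real \<Rightarrow> real \<Rightarrow> real list \<Rightarrow> real" where
  "total_sold \<Delta> \<pi> \<sigma> = (\<Sum>t = 1..length \<sigma>. cr_pursuit_qty \<Delta> \<pi> \<sigma> t)"

definition Phi :: "real \<Rightarrow> real \<Rightarrow> real \<Rightarrow> real \<Rightarrow> real" where
  "Phi \<Delta> m M \<pi> = Sup {total_sold \<Delta> \<pi> \<sigma> | \<sigma>. valid_input m M \<sigma>}"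

end

theory Submission
  imports Defs
begin

text \<open>Whenever the running maximum rises from \<open>a\<close> to \<open>b\<close>, CR-Pursuit sells
  \<open>\<Delta>/\<pi> \<cdot> (1 - a/b) \<le> \<Delta>/\<pi> \<cdot> (ln b - ln a)\<close>, so the sales after the first step telescope to
  at most \<open>\<Delta>/\<pi> \<cdot> ln \<theta>\<close>; the first step sells exactly \<open>\<Delta>/\<pi>\<close>. Conversely, the prices
  \<open>m, m q, \<dots>, m q\<^sup>n = M\<close> with \<open>q = \<theta>\<^bsup>1/n\<^esup>\<close> make CR-Pursuit sell
  \<open>\<Delta>/\<pi> \<cdot> (1 + n (1 - \<theta>\<^bsup>-1/n\<^esup>))\<close>, which tends to \<open>\<Delta>/\<pi> \<cdot> (1 + ln \<theta>)\<close>.\<close>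

lemma run_max_eq_Max: "1 \<le> t \<Longrightarrow> run_max \<sigma> t = Max (price \<sigma> ` {1..t})"
  unfolding run_max_def by (auto intro!: arg_cong[where f = Max])

lemma run_max_1: "run_max \<sigma> 1 = price \<sigma> 1"
  by (simp add: run_max_eq_Max)

lemma run_max_Suc:
  "1 \<le> t \<Longrightarrow> run_max \<sigma> (Suc t) = max (price \<sigma> (Suc t)) (run_max \<sigma> t)"
  by (simp add: run_max_eq_Max atLeastAtMostSuc_conv)

lemma run_max_in_prices: "1 \<le> t \<Longrightarrow> run_max \<sigma> t \<in> price \<sigma> ` {1..t}"
  unfolding run_max_eq_Max by (intro Max_in) auto

lemma run_max_preserves:
  assumes "1 \<le> t" "\<And>s. 1 \<le> s \<Longrightarrow> s \<le> t \<Longrightarrow> P (price \<sigma> s)"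
  shows "P (run_max \<sigma> t)"
  using run_max_in_prices[OF assms(1), of \<sigma>] assms(2) by fastforce

lemma run_max_of_sorted:
  assumes "sorted \<sigma>" "1 \<le> t" "t \<le> length \<sigma>"
  shows "run_max \<sigma> t = price \<sigma> t"
  unfolding run_max_eq_Max[OF assms(2)] price_def
  using assms by (intro Max_eqI) (auto intro!: sorted_nth_mono)

lemma cr_pursuit_qty_1: "price \<sigma> 1 \<noteq> 0 \<Longrightarrow> cr_pursuit_qty \<Delta> \<pi> \<sigma> 1 = \<Delta> / \<pi>"
  unfolding cr_pursuit_qty_def run_max_1 by (simp add: run_max_def)

text \<open>Something is sold only when the new price is the new running maximum, so the price in
  the denominator may be replaced by the running maximum.\<close>

lemma cr_pursuit_qty_Suc:
  assumes "1 \<le> t" "0 < price \<sigma> (Suc t)" "0 < run_max \<sigma> t"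
  shows "cr_pursuit_qty \<Delta> \<pi> \<sigma> (Suc t) = \<Delta> / \<pi> * (1 - run_max \<sigma> t / run_max \<sigma> (Suc t))"
  using assms by (auto simp: cr_pursuit_qty_def run_max_Suc max_def field_simps)

lemma total_sold_eq:
  assumes "length \<sigma> = Suc n" and pos: "\<And>t. 1 \<le> t \<Longrightarrow> t \<le> Suc n \<Longrightarrow> 0 < price \<sigma> t"
  shows "total_sold \<Delta> \<pi> \<sigma> = \<Delta> / \<pi> * (1 + (\<Sum>t = 1..n. 1 - run_max \<sigma> t / run_max \<sigma> (Suc t)))"
proof -
  have run_max_pos: "0 < run_max \<sigma> t" if "1 \<le> t" "t \<le> Suc n" for t
    using that pos by (intro run_max_preserves[where P = "\<lambda>x. 0 < x"]) auto
  have "total_sold \<Delta> \<pi> \<sigma> = cr_pursuit_qty \<Delta> \<pi> \<sigma> 1 + (\<Sum>t = Suc 1..Suc n. cr_pursuit_qty \<Delta> \<pi> \<sigma> t)"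
    unfolding total_sold_def assms(1) by (rule sum.atLeast_Suc_atMost) simp
  also have "(\<Sum>t = Suc 1..Suc n. cr_pursuit_qty \<Delta> \<pi> \<sigma> t) = (\<Sum>t = 1..n. cr_pursuit_qty \<Delta> \<pi> \<sigma> (Suc t))"
    by (simp only: sum.atLeast_Suc_atMost_Suc_shift comp_def)
  also have "\<dots> = (\<Sum>t = 1..n. \<Delta> / \<pi> * (1 - run_max \<sigma> t / run_max \<sigma> (Suc t)))"
    using pos run_max_pos by (intro sum.cong[OF refl] cr_pursuit_qty_Suc) auto
  finally show ?thesis
    using cr_pursuit_qty_1[of \<sigma> \<Delta> \<pi>] pos[of 1] by (simp add: sum_distrib_left distrib_left)
qed

lemma one_minus_div_le_ln_diff:
  fixes a b :: real
  assumes "0 < a" "0 < b"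
  shows "1 - a / b \<le> ln b - ln a"
  using ln_le_minus_one[of "a / b"] assms by (simp add: ln_div)

lemma total_sold_le:
  assumes "valid_input m M \<sigma>" "0 < m" "0 < \<Delta>" "0 < \<pi>"
  shows "total_sold \<Delta> \<pi> \<sigma> \<le> \<Delta> / \<pi> * (1 + ln (M / m))"
proof -
  obtain n where n: "length \<sigma> = Suc n"
    using assms(1) by (cases \<sigma>) (auto simp: valid_input_def)
  have range: "m \<le> price \<sigma> t \<and> price \<sigma> t \<le> M" if "1 \<le> t" "t \<le> Suc n" for t
    using assms(1) that n by (auto simp: valid_input_def)
  have run_range: "m \<le> run_max \<sigma> t \<and> run_max \<sigma> t \<le> M" if "1 \<le> t" "t \<le> Suc n" for t
    using that range by (intro run_max_preserves[where P = "\<lambda>x. m \<le> x \<and> x \<le> M"]) auto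
  have "(\<Sum>t = 1..n. 1 - run_max \<sigma> t / run_max \<sigma> (Suc t))
      \<le> (\<Sum>t = 1..n. ln (run_max \<sigma> (Suc t)) - ln (run_max \<sigma> t))"
    using run_range assms(2)
    by (intro sum_mono one_minus_div_le_ln_diff) (auto intro: less_le_trans)
  also have "\<dots> = ln (run_max \<sigma> (Suc n)) - ln (price \<sigma> 1)"
    using sum_Suc_diff[of 1 n "\<lambda>t. ln (run_max \<sigma> t)"] run_max_1[of \<sigma>] by simp
  also have "\<dots> \<le> ln M - ln m"
    using run_range[of "Suc n"] range[of 1] assms(2) by (intro diff_mono) auto
  also have "\<dots> = ln (M / m)"
    using run_range[of 1] assms(2) by (simp add: ln_div)
  finally have sum_le: "(\<Sum>t = 1..n. 1 - run_max \<sigma> t / run_max \<sigma> (Suc t)) \<le> ln (M / m)" .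
  have "total_sold \<Delta> \<pi> \<sigma> = \<Delta> / \<pi> * (1 + (\<Sum>t = 1..n. 1 - run_max \<sigma> t / run_max \<sigma> (Suc t)))"
    using range assms(2) by (intro total_sold_eq[OF n]) (auto intro: less_le_trans)
  then show ?thesis
    using sum_le assms(3,4) by (simp add: divide_right_mono mult_left_mono)
qed

definition geometric_prices :: "real \<Rightarrow> real \<Rightarrow> nat \<Rightarrow> real list" where
  "geometric_prices m q n = map (\<lambda>k. m * q ^ k) [0..<Suc n]"

lemma length_geometric_prices [simp]: "length (geometric_prices m q n) = Suc n"
  by (simp add: geometric_prices_def)

lemma price_geometric_prices:
  assumes "1 \<le> t" "t \<le> Suc n"
  shows "price (geometric_prices m q n) t = m * q ^ (t - 1)"
proof -
  have "[0..<Suc n] ! (t - 1) = t - 1"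
    using assms by (simp del: upt_Suc)
  then show ?thesis
    using assms by (simp add: price_def geometric_prices_def del: upt_Suc)
qed

lemma sorted_geometric_prices:
  assumes "0 \<le> m" "1 \<le> q"
  shows "sorted (geometric_prices m q n)"
  unfolding geometric_prices_def sorted_map
  using assms by (auto simp: sorted_wrt_iff_nth_less intro!: mult_left_mono power_increasing
      simp del: upt_Suc)

lemma valid_input_geometric_prices:
  assumes "0 \<le> m" "1 \<le> q" "m * q ^ n \<le> M"
  shows "valid_input m M (geometric_prices m q n)"
proof -
  have "m \<le> m * q ^ k \<and> m * q ^ k \<le> M" if "k \<le> n" for k
    using assms that mult_left_mono[OF power_increasing[OF that assms(2)] assms(1)]
      mult_left_mono[OF one_le_power[OF assms(2)] assms(1)] by auto
  then show ?thesis
    by (auto simp: valid_input_def price_geometric_prices) (simp add: geometric_prices_def)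
qed

lemma total_sold_geometric_prices:
  assumes "0 < m" "1 \<le> q"
  shows "total_sold \<Delta> \<pi> (geometric_prices m q n) = \<Delta> / \<pi> * (1 + real n * (1 - 1 / q))"
proof -
  let ?\<sigma> = "geometric_prices m q n"
  have q: "0 < q" using assms(2) by simp
  have "run_max ?\<sigma> t / run_max ?\<sigma> (Suc t) = 1 / q" if t: "t \<in> {1..n}" for t
  proof -
    obtain k where "t = Suc k" using t by (cases t) auto
    then show ?thesis
      using t assms q
      by (simp add: run_max_of_sorted sorted_geometric_prices price_geometric_prices)
  qed
  moreover have "0 < price ?\<sigma> t" if "1 \<le> t" "t \<le> Suc n" for t
    using that assms q by (simp add: price_geometric_prices)
  ultimately show ?thesis
    by (simp add: total_sold_eq)
qed

lemma one_minus_exp_minus_ge: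
  fixes u :: real
  assumes "0 \<le> u"
  shows "u - u\<^sup>2 \<le> 1 - exp (- u)"
proof -
  have "exp (- u) \<le> 1 / (1 + u)"
    using exp_ge_add_one_self[of u] assms by (simp add: exp_minus field_simps)
  also have "\<dots> \<le> 1 - u + u\<^sup>2"
    using assms by (simp add: field_simps power2_eq_square)
  finally show ?thesis by simp
qed

lemma geometric_prices_total_sold_ge:
  assumes "0 < m" "m \<le> M" "0 < n" "0 \<le> \<Delta> / \<pi>"
  shows "\<exists>\<sigma>. valid_input m M \<sigma> \<and>
    \<Delta> / \<pi> * (1 + ln (M / m) - (ln (M / m))\<^sup>2 / real n) \<le> total_sold \<Delta> \<pi> \<sigma>"
proof -
  define L where "L = ln (M / m)"
  define q where "q = exp (L / real n)"
  have L: "0 \<le> L" using assms by (simp add: L_def)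
  have q: "1 \<le> q" using L by (simp add: q_def)
  have "m * q ^ n = M"
    using assms by (simp flip: exp_of_nat_mult add: q_def L_def)
  then have valid: "valid_input m M (geometric_prices m q n)"
    using assms q by (intro valid_input_geometric_prices) auto
  have "L - L\<^sup>2 / real n = real n * (L / real n - (L / real n)\<^sup>2)"
    using assms by (simp add: field_simps power2_eq_square)
  also have "\<dots> \<le> real n * (1 - exp (- (L / real n)))"
    using one_minus_exp_minus_ge[of "L / real n"] L by (intro mult_left_mono) auto
  also have "\<dots> = real n * (1 - 1 / q)"
    by (simp add: q_def exp_minus inverse_eq_divide)
  finally have "\<Delta> / \<pi> * (1 + L - L\<^sup>2 / real n) \<le> total_sold \<Delta> \<pi> (geometric_prices m q n)"
    unfolding total_sold_geometric_prices[OF assms(1) q] using assms(4)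
    by (intro mult_left_mono) linarith+
  with valid show ?thesis
    unfolding L_def by blast
qed

theorem mainTheorem12:
  fixes \<Delta> m M \<pi> :: real
  assumes "\<Delta> > 0" and "0 < m" and "m \<le> M" and "\<pi> \<ge> 1"
  shows "Phi \<Delta> m M \<pi> = \<Delta> / \<pi> * (1 + ln (M / m))"
proof -
  define S where "S = {total_sold \<Delta> \<pi> \<sigma> | \<sigma>. valid_input m M \<sigma>}"
  define L where "L = ln (M / m)"
  have upper: "x \<le> \<Delta> / \<pi> * (1 + L)" if "x \<in> S" for x
    using that assms total_sold_le unfolding S_def L_def by fastforce
  have lower: "\<exists>x\<in>S. \<Delta> / \<pi> * (1 + L - L\<^sup>2 / real n) \<le> x" if "0 < n" for n
    using geometric_prices_total_sold_ge[OF assms(2,3) that, of \<Delta> \<pi>] assms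
    unfolding S_def L_def by fastforce
  then have "\<Delta> / \<pi> * (1 + L - L\<^sup>2 / real n) \<le> Sup S" if "0 < n" for n
    using that upper by (meson bdd_aboveI cSup_upper order_trans)
  moreover have "(\<lambda>n. \<Delta> / \<pi> * (1 + L - L\<^sup>2 / real n)) \<longlonglongrightarrow> \<Delta> / \<pi> * (1 + L - 0)"
    by (intro tendsto_intros tendsto_divide_0[OF tendsto_const] filterlim_real_sequentially)
  ultimately have "\<Delta> / \<pi> * (1 + L) \<le> Sup S"
    by (intro LIMSEQ_le_const2) (auto intro!: exI[of _ 1])
  moreover have "Sup S \<le> \<Delta> / \<pi> * (1 + L)"
    using lower[of 1] upper by (intro cSup_least) auto
  ultimately show ?thesis
    unfolding Phi_def S_def[symmetric] L_def by simp
qed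

end
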